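(* Let $(S,V)$ be a complete semiring-semimodule pair, let $n\ge1$, let $\Gamma$ be an alphabet, and let $M\in (S^{n\times n})^{\Gamma^*\times\Gamma^*}$ be a pushdown transition matrix. Then for all $k\ge1$, $p_1,\dots,p_k\in\Gamma$ and $0\le l\le n$, $$(M^{\omega,l})_{p_1\dots p_k}=\sum_{1\le j\le k}(M^* )_{p_1\dots p_{j-1},\epsilon}\,(M^{\omega,l})_{p_j}.$$
   Context: A complete semiring-semimodule pair $(S,V)$ (in the sense of Ésik and Kuich, "Modern Automata Theory") consists of a complete starsemiring $S$ (arbitrary sums with infinite associativity/commutativity/distributivity laws, star $s^*=\sum_{j\ge0}s^j$) and a complete $S$-semimodule $V$, with infinite products $\prod_{j\ge1}s_j\in V$ of sequences in $S$ satisfying the axioms of that framework. $M\in (S^{n\times n})^{\Gamma^*\times\Gamma^*}$ (a $\Gamma^*\times\Gamma^*$ matrix with $n\times n$ blocks over $S$) is a pushdown transition matrix if (i) for each $p\in\Gamma$ only finitely many blocks $M_{p,\pi}$ are nonzero, and (ii) $M_{\pi_1,\pi_2}=M_{p,\pi}$ if $\pi_1=p\pi'$, $\pi_2=\pi\pi'$ for some $p\in\Gamma$, $\pi,\pi'\in\Gamma^*$, and $0$ otherwise. $M^*=\sum_{m\ge0}M^m$ with blocks $(M^* )_{\pi,\pi'}$; $p_1\dots p_0=\epsilon$. Let $P_l=\{(j_1,j_2,\dots)\in\{1,\dots,n\}^\omega\mid j_t\le l\text{ for infinitely many }t\}$. Then $M^{\omega,l}\in (V^n)^{\Gamma^*}$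 is the column vector with $$((M^{\omega,l})_\pi)_i=\sum_{\pi_1,\pi_2,\ldots\in\Gamma^*}\ \sum_{(j_1,j_2,\ldots)\in P_l}(M_{\pi,\pi_1})_{i,j_1}(M_{\pi_1,\pi_2})_{j_1,j_2}(M_{\pi_2,\pi_3})_{j_2,j_3}\cdots,$$ i.e. the sum of weights of all infinite paths from $(\pi,i)$ in the graph on $\Gamma^*\times\{1,\dots,n\}$ with adjacency matrix $M$ that visit vertices $(\pi',i')$ with $i'\le l$ infinitely often. *)

theory Defs
  imports Main "HOL-Library.Countable" "HOL-Library.Nat_Bijection"
begin

text \<open>Complete sums are modelled by an operator summing a family over an index set of
  the universal index type idx = nat => nat (all index sets of cardinality at most the
  continuum). Families over other (countable or sequence) index types are transported
  into idx along an injection.\<close>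

type_synonym idx = "nat \<Rightarrow> nat"

definition gsum :: "((idx \<Rightarrow> 'b) \<Rightarrow> idx set \<Rightarrow> 'b) \<Rightarrow> ('i \<Rightarrow> idx) \<Rightarrow> ('i \<Rightarrow> 'b) \<Rightarrow> 'i set \<Rightarrow> 'b" where
  "gsum Sig e f I = Sig (\<lambda>u. f (inv_into I e u)) (e ` I)"

definition encseq :: "(nat \<Rightarrow> idx) \<Rightarrow> idx" where
  "encseq f = (\<lambda>k. f (fst (prod_decode k)) (snd (prod_decode k)))"

definition encc :: "'c::countable \<Rightarrow> idx" where
  "encc x = (\<lambda>_. to_nat x)"

definition encs :: "(nat \<Rightarrow> 'c::countable) \<Rightarrow> idx" where
  "encs q = (\<lambda>t. to_nat (q t))"

definition complete_monoid :: "((idx \<Rightarrow> 'b::comm_monoid_add) \<Rightarrow> idx set \<Rightarrow> 'b) \<Rightarrow> bool" where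
  "complete_monoid Sig \<longleftrightarrow>
     (\<forall>f I g. (\<forall>x\<in>I. f x = g x) \<longrightarrow> Sig f I = Sig g I) \<and>
     (\<forall>f. Sig f {} = 0) \<and>
     (\<forall>f x. Sig f {x} = f x) \<and>
     (\<forall>f x y. x \<noteq> y \<longrightarrow> Sig f {x, y} = f x + f y) \<and>
     (\<forall>f (J::idx set) (Is :: idx \<Rightarrow> idx set).
        (\<forall>j\<in>J. \<forall>j'\<in>J. j \<noteq> j' \<longrightarrow> Is j \<inter> Is j' = {}) \<longrightarrow>
        Sig (\<lambda>j. Sig f (Is j)) J = Sig f (\<Union>j\<in>J. Is j))"

text \<open>Complete semiring (a semiring with 0 and 1, not necessarily 0 ~= 1).\<close>
definition complete_semiring :: "((idx \<Rightarrow> 'a::{semiring_0,monoid_mult}) \<Rightarrow> idx set \<Rightarrow> 'a) \<Rightarrow> bool" where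
  "complete_semiring SigS \<longleftrightarrow> complete_monoid SigS \<and>
     (\<forall>c f I. SigS (\<lambda>i. c * f i) I = c * SigS f I) \<and>
     (\<forall>c f I. SigS (\<lambda>i. f i * c) I = SigS f I * c)"

definition complete_semimodule ::
  "((idx \<Rightarrow> 'a::{semiring_0,monoid_mult}) \<Rightarrow> idx set \<Rightarrow> 'a) \<Rightarrow>
   ((idx \<Rightarrow> 'v::comm_monoid_add) \<Rightarrow> idx set \<Rightarrow> 'v) \<Rightarrow> ('a \<Rightarrow> 'v \<Rightarrow> 'v) \<Rightarrow> bool" where
  "complete_semimodule SigS SigV smult \<longleftrightarrow> complete_monoid SigV \<and>
     (\<forall>s v1 v2. smult s (v1 + v2) = smult s v1 + smult s v2) \<and>
     (\<forall>s1 s2 v. smult (s1 + s2) v = smult s1 v + smult s2 v) \<and>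
     (\<forall>s1 s2 v. smult (s1 * s2) v = smult s1 (smult s2 v)) \<and>
     (\<forall>v. smult 1 v = v) \<and> (\<forall>v. smult 0 v = 0) \<and> (\<forall>s. smult s 0 = 0) \<and>
     (\<forall>s f I. SigV (\<lambda>i. smult s (f i)) I = smult s (SigV f I)) \<and>
     (\<forall>f I v. smult (SigS f I) v = SigV (\<lambda>i. smult (f i) v) I)"

text \<open>Complete semiring-semimodule pair with infinite product iprod (sequences indexed
  from 0, i.e. iprod s stands for s_0 s_1 s_2 ...).\<close>
definition complete_ssp ::
  "((idx \<Rightarrow> 'a::{semiring_0,monoid_mult}) \<Rightarrow> idx set \<Rightarrow> 'a) \<Rightarrow>
   ((idx \<Rightarrow> 'v::comm_monoid_add) \<Rightarrow> idx set \<Rightarrow> 'v) \<Rightarrow> ('a \<Rightarrow> 'v \<Rightarrow> 'v) \<Rightarrow>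
   ((nat \<Rightarrow> 'a) \<Rightarrow> 'v) \<Rightarrow> bool" where
  "complete_ssp SigS SigV smult iprod \<longleftrightarrow>
     complete_semiring SigS \<and> complete_semimodule SigS SigV smult \<and>
     (\<forall>s. iprod s = smult (s 0) (iprod (\<lambda>j. s (Suc j)))) \<and>
     (\<forall>s (m::nat \<Rightarrow> nat). strict_mono m \<and> m 0 = 0 \<longrightarrow>
        iprod s = iprod (\<lambda>j. prod_list (map s [m j..<m (Suc j)]))) \<and>
     (\<forall>(s :: nat \<Rightarrow> idx \<Rightarrow> 'a) (Is :: nat \<Rightarrow> idx set).
        iprod (\<lambda>j. SigS (s j) (Is j)) =
        gsum SigV encseq (\<lambda>f. iprod (\<lambda>j. s j (f j))) {f. \<forall>j. f j \<in> Is j})"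

text \<open>Pushdown transition matrices: M pi1 pi2 i j is entry (i,j) (1 <= i,j <= n) of block
  (pi1,pi2); stacks are lists whose head is the top symbol.\<close>
definition pushdown_tm :: "nat \<Rightarrow> ('g list \<Rightarrow> 'g list \<Rightarrow> nat \<Rightarrow> nat \<Rightarrow> 'a::zero) \<Rightarrow> bool" where
  "pushdown_tm n M \<longleftrightarrow>
     (\<forall>p. finite {\<pi>. \<exists>i\<in>{1..n}. \<exists>j\<in>{1..n}. M [p] \<pi> i j \<noteq> 0}) \<and>
     (\<forall>p \<pi> \<pi>'. \<forall>i\<in>{1..n}. \<forall>j\<in>{1..n}. M (p # \<pi>') (\<pi> @ \<pi>') i j = M [p] \<pi> i j) \<and>
     (\<forall>\<pi>1 \<pi>2. (\<nexists>p \<pi> \<pi>'. \<pi>1 = p # \<pi>' \<and> \<pi>2 = \<pi> @ \<pi>') \<longrightarrow>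
        (\<forall>i\<in>{1..n}. \<forall>j\<in>{1..n}. M \<pi>1 \<pi>2 i j = 0))"

definition mat_mult :: "((idx \<Rightarrow> 'a::{semiring_0,monoid_mult}) \<Rightarrow> idx set \<Rightarrow> 'a) \<Rightarrow> nat \<Rightarrow>
   ('g::countable list \<Rightarrow> 'g list \<Rightarrow> nat \<Rightarrow> nat \<Rightarrow> 'a) \<Rightarrow> ('g list \<Rightarrow> 'g list \<Rightarrow> nat \<Rightarrow> nat \<Rightarrow> 'a) \<Rightarrow>
   'g list \<Rightarrow> 'g list \<Rightarrow> nat \<Rightarrow> nat \<Rightarrow> 'a" where
  "mat_mult SigS n A B \<pi>1 \<pi>2 i j =
     gsum SigS encc (\<lambda>(\<pi>, k). A \<pi>1 \<pi> i k * B \<pi> \<pi>2 k j) (UNIV \<times> {1..n})"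

primrec mat_pow :: "((idx \<Rightarrow> 'a::{semiring_0,monoid_mult}) \<Rightarrow> idx set \<Rightarrow> 'a) \<Rightarrow> nat \<Rightarrow>
   ('g::countable list \<Rightarrow> 'g list \<Rightarrow> nat \<Rightarrow> nat \<Rightarrow> 'a) \<Rightarrow> nat \<Rightarrow>
   'g list \<Rightarrow> 'g list \<Rightarrow> nat \<Rightarrow> nat \<Rightarrow> 'a" where
  "mat_pow SigS n M 0 = (\<lambda>\<pi>1 \<pi>2 i j. if \<pi>1 = \<pi>2 \<and> i = j then 1 else 0)"
| "mat_pow SigS n M (Suc m) = mat_mult SigS n (mat_pow SigS n M m) M"

definition mat_star :: "((idx \<Rightarrow> 'a::{semiring_0,monoid_mult}) \<Rightarrow> idx set \<Rightarrow> 'a) \<Rightarrow> nat \<Rightarrow>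
   ('g::countable list \<Rightarrow> 'g list \<Rightarrow> nat \<Rightarrow> nat \<Rightarrow> 'a) \<Rightarrow>
   'g list \<Rightarrow> 'g list \<Rightarrow> nat \<Rightarrow> nat \<Rightarrow> 'a" where
  "mat_star SigS n M \<pi>1 \<pi>2 i j = gsum SigS encc (\<lambda>m. mat_pow SigS n M m \<pi>1 \<pi>2 i j) UNIV"

text \<open>M^{omega,l}: q t = (pi_{t+1}, j_{t+1}); the path starts at (pi, i).\<close>
definition omega_l :: "((idx \<Rightarrow> 'v::comm_monoid_add) \<Rightarrow> idx set \<Rightarrow> 'v) \<Rightarrow> ((nat \<Rightarrow> 'a) \<Rightarrow> 'v) \<Rightarrow>
   nat \<Rightarrow> ('g::countable list \<Rightarrow> 'g list \<Rightarrow> nat \<Rightarrow> nat \<Rightarrow> 'a) \<Rightarrow> nat \<Rightarrow> 'g list \<Rightarrow> nat \<Rightarrow> 'v" where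
  "omega_l SigV iprod n M l \<pi> i =
     gsum SigV encs
       (\<lambda>q. let vtx = (\<lambda>t. if t = 0 then (\<pi>, i) else q (t - 1)) in
            iprod (\<lambda>t. M (fst (vtx t)) (fst (vtx (Suc t))) (snd (vtx t)) (snd (vtx (Suc t)))))
       {q. (\<forall>t. snd (q t) \<in> {1..n}) \<and> infinite {t. snd (q t) \<le> l}}"

end

(* Every infinite path from the configuration (p_1 ... p_k, i) has a first time at which its
   stack is lowest. If that stack is p_j ... p_k, the path up to then is a walk from
   p_1 ... p_(j-1) to the empty stack performed on top of the untouched suffix p_j ... p_k, and
   from then on it is an infinite path from the single symbol p_j performed on top of
   p_(j+1) ... p_k, which it never touches again. Since a pushdown transition matrix only looks
   at the top of the stack, cutting at that time is a weight-preserving bijection between the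
   paths summed in (M^(omega,l))_(p_1 ... p_k) and the pairs summed on the right-hand side;
   walks and paths that violate the stack discipline have weight zero. *)

theory Submission
  imports Defs
begin

section \<open>Complete sums\<close>

locale complete_sum =
  fixes Sig :: "(idx \<Rightarrow> 'b::comm_monoid_add) \<Rightarrow> idx set \<Rightarrow> 'b"
  assumes cong: "(\<And>x. x \<in> I \<Longrightarrow> f x = g x) \<Longrightarrow> Sig f I = Sig g I"
    and empty: "Sig f {} = 0"
    and singleton: "Sig f {x} = f x"
    and pair: "x \<noteq> y \<Longrightarrow> Sig f {x, y} = f x + f y"
    and UN_disjoint: "(\<And>j j'. j \<in> J \<Longrightarrow> j' \<in> J \<Longrightarrow> j \<noteq> j' \<Longrightarrow> Is j \<inter> Is j' = {}) \<Longrightarrow>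
      Sig (\<lambda>j. Sig f (Is j)) J = Sig f (\<Union>j\<in>J. Is j)"

lemma complete_sumI:
  assumes "complete_monoid Sig"
  shows "complete_sum Sig"
proof
  note axioms = assms[unfolded complete_monoid_def]
  have "\<forall>f I g. (\<forall>x\<in>I. f x = g x) \<longrightarrow> Sig f I = Sig g I" using axioms by (elim conjE)
  then show "Sig f I = Sig g I" if "\<And>x. x \<in> I \<Longrightarrow> f x = g x" for I f g using that by blast
  have "\<forall>f. Sig f {} = 0" using axioms by (elim conjE)
  then show "Sig f {} = 0" for f by blast
  have "\<forall>f x. Sig f {x} = f x" using axioms by (elim conjE)
  then show "Sig f {x} = f x" for f x by blast
  have "\<forall>f x y. x \<noteq> y \<longrightarrow> Sig f {x, y} = f x + f y" using axioms by (elim conjE)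
  then show "Sig f {x, y} = f x + f y" if "x \<noteq> y" for f x y using that by blast
  have "\<forall>f (J::idx set) (Is :: idx \<Rightarrow> idx set).
      (\<forall>j\<in>J. \<forall>j'\<in>J. j \<noteq> j' \<longrightarrow> Is j \<inter> Is j' = {}) \<longrightarrow>
      Sig (\<lambda>j. Sig f (Is j)) J = Sig f (\<Union>j\<in>J. Is j)" using axioms by (elim conjE)
  then show "Sig (\<lambda>j. Sig f (Is j)) J = Sig f (\<Union>j\<in>J. Is j)"
    if "\<And>j j'. j \<in> J \<Longrightarrow> j' \<in> J \<Longrightarrow> j \<noteq> j' \<Longrightarrow> Is j \<inter> Is j' = {}" for J Is f
    using that by blast
qed

context complete_sum
begin

lemma reindex:
  assumes "inj_on h I"
  shows "Sig f (h ` I) = Sig (f \<circ> h) I"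
proof -
  have "Sig (f \<circ> h) I = Sig (\<lambda>j. Sig f {h j}) I"
    by (rule cong) (simp add: singleton)
  also have "\<dots> = Sig f (\<Union>j\<in>I. {h j})"
    by (rule UN_disjoint) (use assms in \<open>auto simp: inj_on_def\<close>)
  finally show ?thesis by (simp add: UNION_singleton_eq_range)
qed

lemma gsum_cong:
  assumes "\<And>x. x \<in> I \<Longrightarrow> f x = g x"
  shows "gsum Sig e f I = gsum Sig e g I"
  unfolding gsum_def using assms by (intro cong) (auto simp: inv_into_into)

lemma gsum_empty: "gsum Sig e f {} = 0"
  unfolding gsum_def by (simp add: empty)

lemma gsum_singleton: "gsum Sig e f {x} = f x"
  unfolding gsum_def by (simp add: singleton)

lemma gsum_change_enc:
  assumes i1: "inj_on e1 I" and i2: "inj_on e2 I"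
  shows "gsum Sig e1 f I = gsum Sig e2 f I"
proof -
  define h where "h = e2 \<circ> inv_into I e1"
  have "inj_on h (e1 ` I)"
    unfolding h_def using i2 inv_into_image_cancel[OF i1]
    by (intro comp_inj_on inj_on_inv_into) auto
  moreover have "h ` e1 ` I = e2 ` I"
    unfolding h_def using i1 by (auto simp: image_iff)
  ultimately have "gsum Sig e2 f I = Sig ((\<lambda>u. f (inv_into I e2 u)) \<circ> h) (e1 ` I)"
    unfolding gsum_def by (metis reindex)
  also have "\<dots> = gsum Sig e1 f I"
    unfolding gsum_def by (rule cong) (auto simp: h_def inv_into_f_f i1 i2 inv_into_into)
  finally show ?thesis ..
qed

lemma gsum_reindex:
  assumes ih: "inj_on h I" and ie: "inj_on e (h ` I)" and ie': "inj_on e' I"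
  shows "gsum Sig e f (h ` I) = gsum Sig e' (f \<circ> h) I"
proof -
  have ieh: "inj_on (e \<circ> h) I" using ih ie by (rule comp_inj_on)
  have "gsum Sig e f (h ` I) = gsum Sig (e \<circ> h) (f \<circ> h) I"
    unfolding gsum_def image_comp
  proof (rule cong)
    fix u assume "u \<in> (e \<circ> h) ` I"
    then obtain x where x: "x \<in> I" "u = e (h x)" by auto
    then have "inv_into (h ` I) e u = h x" and "inv_into I (e \<circ> h) u = x"
      using ie inv_into_f_f[OF ieh x(1)] by (auto simp: inv_into_f_f)
    then show "f (inv_into (h ` I) e u) = (f \<circ> h) (inv_into I (e \<circ> h) u)" by simp
  qed
  also have "\<dots> = gsum Sig e' (f \<circ> h) I" by (rule gsum_change_enc[OF ieh ie'])
  finally show ?thesis .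
qed

lemma gsum_UN_disjoint:
  assumes iJ: "inj_on eJ J" and ie: "inj_on e (\<Union>j\<in>J. Is j)"
    and disj: "\<And>j j'. j \<in> J \<Longrightarrow> j' \<in> J \<Longrightarrow> j \<noteq> j' \<Longrightarrow> Is j \<inter> Is j' = {}"
  shows "gsum Sig eJ (\<lambda>j. gsum Sig e f (Is j)) J = gsum Sig e f (\<Union>j\<in>J. Is j)"
proof -
  define U where "U = (\<Union>j\<in>J. Is j)"
  define f' where "f' = (\<lambda>u. f (inv_into U e u))"
  define Is' where "Is' = (\<lambda>u. e ` Is (inv_into J eJ u))"
  have inner: "gsum Sig e f (Is j) = Sig f' (e ` Is j)" if "j \<in> J" for j
    unfolding gsum_def
  proof (rule cong)
    fix u assume "u \<in> e ` Is j"
    then obtain x where x: "x \<in> Is j" "u = e x" by auto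
    moreover have "inj_on e (Is j)" by (rule inj_on_subset[OF ie]) (use that in auto)
    moreover have "x \<in> U" unfolding U_def using x that by auto
    ultimately show "f (inv_into (Is j) e u) = f' u"
      unfolding f'_def using ie by (simp add: inv_into_f_f U_def)
  qed
  have "gsum Sig eJ (\<lambda>j. gsum Sig e f (Is j)) J = Sig (\<lambda>u. Sig f' (Is' u)) (eJ ` J)"
    unfolding gsum_def Is'_def
    by (rule cong) (auto simp: inner[unfolded gsum_def] inv_into_into inv_into_f_f iJ)
  also have "\<dots> = Sig f' (\<Union>u\<in>eJ ` J. Is' u)"
  proof (rule UN_disjoint)
    fix u u' assume "u \<in> eJ ` J" "u' \<in> eJ ` J" "u \<noteq> u'"
    then obtain j j' where jj: "j \<in> J" "j' \<in> J" "j \<noteq> j'" "u = eJ j" "u' = eJ j'" by auto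
    then have "e ` Is j \<inter> e ` Is j' = e ` (Is j \<inter> Is j')"
      by (intro inj_on_image_Int[OF ie, symmetric]) auto
    then show "Is' u \<inter> Is' u' = {}"
      unfolding Is'_def using jj iJ disj by (simp add: inv_into_f_f)
  qed
  also have "(\<Union>u\<in>eJ ` J. Is' u) = e ` U"
    unfolding Is'_def U_def using iJ by (auto simp: inv_into_f_f)
  finally show ?thesis unfolding gsum_def f'_def U_def .
qed

lemma gsum_neutral:
  assumes "\<And>x. x \<in> I \<Longrightarrow> f x = 0"
  shows "gsum Sig e f I = 0"
proof -
  have "gsum Sig e f I = Sig (\<lambda>u. Sig (\<lambda>_. 0) {}) (e ` I)"
    unfolding gsum_def using assms by (intro cong) (simp add: inv_into_into empty)
  also have "\<dots> = Sig (\<lambda>_. 0) (\<Union>u\<in>e ` I. {})"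
    by (rule UN_disjoint) auto
  finally show ?thesis by (simp add: empty)
qed

lemma gsum_Un_disjoint:
  assumes ie: "inj_on e (A \<union> B)" and disj: "A \<inter> B = {}"
  shows "gsum Sig e f (A \<union> B) = gsum Sig e f A + gsum Sig e f B"
proof -
  define Is where "Is = (\<lambda>b::bool. if b then B else A)"
  define eb where "eb = (\<lambda>b::bool. \<lambda>_::nat. if b then 1 else 0 :: nat)"
  have ieb: "inj eb" and ne: "eb False \<noteq> eb True"
    unfolding eb_def inj_def by (auto dest: fun_cong)
  have "gsum Sig e f (A \<union> B) = gsum Sig eb (\<lambda>j. gsum Sig e f (Is j)) UNIV"
    using gsum_UN_disjoint[OF ieb, of e Is f] ie disj
    by (simp add: Is_def UNIV_bool Un_commute Int_commute)
  also have "\<dots> = gsum Sig e f A + gsum Sig e f B"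
    unfolding gsum_def[of Sig eb] UNIV_bool image_insert image_empty pair[OF ne]
    using ieb by (simp add: Is_def inv_into_f_f flip: UNIV_bool)
  finally show ?thesis .
qed

lemma gsum_eq_sum:
  assumes "finite I" and "inj_on e I"
  shows "gsum Sig e f I = sum f I"
  using assms
proof (induction I rule: finite_induct)
  case empty
  then show ?case by (simp add: gsum_empty)
next
  case (insert x F)
  then have "gsum Sig e f ({x} \<union> F) = gsum Sig e f {x} + gsum Sig e f F"
    by (intro gsum_Un_disjoint) auto
  with insert show ?case by (simp add: gsum_singleton inj_on_subset)
qed

lemma gsum_mono_neutral_right:
  assumes "B \<subseteq> A" and "inj_on e A" and "\<And>x. x \<in> A - B \<Longrightarrow> f x = 0"
  shows "gsum Sig e f A = gsum Sig e f B"
proof -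
  have "gsum Sig e f (B \<union> (A - B)) = gsum Sig e f B + gsum Sig e f (A - B)"
    using assms by (intro gsum_Un_disjoint) (auto simp: Un_absorb1)
  moreover have "gsum Sig e f (A - B) = 0" by (rule gsum_neutral) (rule assms(3))
  ultimately show ?thesis using assms(1) by (simp add: Un_absorb1)
qed

end

lemma inj_on_encc: "inj_on encc A"
  unfolding inj_on_def encc_def by (metis to_nat_split)

lemma inj_on_encs: "inj_on encs A"
  unfolding inj_on_def encs_def by (metis ext to_nat_split)

lemma (in complete_sum) gsum_Sigma:
  fixes A :: "'i::countable set"
  assumes "finite A" and ie: "inj_on e (Sigma A B)"
  shows "(\<Sum>a\<in>A. gsum Sig (\<lambda>b. e (a, b)) (\<lambda>b. f (a, b)) (B a)) = gsum Sig e f (Sigma A B)"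
proof -
  have U: "(\<Union>a\<in>A. Pair a ` B a) = Sigma A B" by auto
  have "gsum Sig e f (Pair a ` B a) = gsum Sig (\<lambda>b. e (a, b)) (\<lambda>b. f (a, b)) (B a)"
    if "a \<in> A" for a
    using that ie by (subst gsum_reindex) (auto simp: inj_on_def comp_def)
  then have "(\<Sum>a\<in>A. gsum Sig (\<lambda>b. e (a, b)) (\<lambda>b. f (a, b)) (B a))
      = gsum Sig encc (\<lambda>a. gsum Sig e f (Pair a ` B a)) A"
    using assms by (simp add: gsum_eq_sum[OF _ inj_on_encc])
  also have "\<dots> = gsum Sig e f (\<Union>a\<in>A. Pair a ` B a)"
    using ie by (intro gsum_UN_disjoint[OF inj_on_encc]) (auto simp: U)
  finally show ?thesis by (simp only: U)
qed

section \<open>Complete semiring-semimodule pairs\<close>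

lemma complete_semiringD:
  assumes "complete_semiring SigS"
  shows "complete_sum SigS" and "SigS (\<lambda>i. f i * c) I = SigS f I * c"
proof -
  have "complete_monoid SigS" using assms unfolding complete_semiring_def by (elim conjE)
  then show "complete_sum SigS" by (rule complete_sumI)
  have "\<forall>c f I. SigS (\<lambda>i. f i * c) I = SigS f I * c"
    using assms unfolding complete_semiring_def by (elim conjE)
  then show "SigS (\<lambda>i. f i * c) I = SigS f I * c" by blast
qed

locale complete_pair =
  fixes SigS :: "(idx \<Rightarrow> 'a::{semiring_0,monoid_mult}) \<Rightarrow> idx set \<Rightarrow> 'a"
    and SigV :: "(idx \<Rightarrow> 'v::comm_monoid_add) \<Rightarrow> idx set \<Rightarrow> 'v"
    and smult :: "'a \<Rightarrow> 'v \<Rightarrow> 'v"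
    and iprod :: "(nat \<Rightarrow> 'a) \<Rightarrow> 'v"
  assumes semiring_S: "complete_semiring SigS"
    and monoid_V: "complete_monoid SigV"
    and smult_mult: "smult (s1 * s2) v = smult s1 (smult s2 v)"
    and smult_one: "smult 1 v = v"
    and smult_zero_left: "smult 0 v = 0"
    and smult_zero_right: "smult s 0 = 0"
    and smult_sum_right: "SigV (\<lambda>i. smult s (g i)) I = smult s (SigV g I)"
    and smult_sum_left: "smult (SigS f I) v = SigV (\<lambda>i. smult (f i) v) I"
    and iprod_unfold: "iprod w = smult (w 0) (iprod (\<lambda>j. w (Suc j)))"

lemma complete_pairI:
  "complete_ssp SigS SigV smult iprod \<Longrightarrow> complete_pair SigS SigV smult iprod"
  unfolding complete_ssp_def complete_semimodule_def complete_pair_def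
  by (elim conjE) (intro conjI; assumption)

sublocale complete_pair \<subseteq> V: complete_sum SigV
  by (rule complete_sumI[OF monoid_V])

context complete_pair
begin

lemma iprod_split: "iprod w = smult (prod_list (map w [0..<m])) (iprod (\<lambda>t. w (t + m)))"
proof (induction m)
  case 0
  then show ?case by (simp add: smult_one)
next
  case (Suc m)
  have "iprod (\<lambda>t. w (t + m)) = smult (w m) (iprod (\<lambda>t. w (t + Suc m)))"
    using iprod_unfold[of "\<lambda>t. w (t + m)"] by simp
  with Suc show ?case by (simp add: smult_mult)
qed

lemma iprod_eq_0:
  assumes "w t = 0"
  shows "iprod w = 0"
proof -
  have "iprod (\<lambda>u. w (u + t)) = smult (w t) (iprod (\<lambda>u. w (Suc u + t)))"
    using iprod_unfold[of "\<lambda>u. w (u + t)"] by simp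
  then show ?thesis
    using iprod_split[of w t] assms by (simp add: smult_zero_left smult_zero_right)
qed

lemma gsum_smult_gsum:
  assumes i1: "inj_on e1 X" and i2: "inj_on e2 Y" and ie: "inj_on e (X \<times> Y)"
  shows "smult (gsum SigS e1 f X) (gsum SigV e2 g Y) =
    gsum SigV e (\<lambda>(x, y). smult (f x) (g y)) (X \<times> Y)"
proof -
  have U: "(\<Union>x\<in>X. Pair x ` Y) = X \<times> Y" by auto
  have "smult (gsum SigS e1 f X) (gsum SigV e2 g Y) =
      gsum SigV e1 (\<lambda>x. smult (f x) (gsum SigV e2 g Y)) X"
    unfolding gsum_def by (rule smult_sum_left)
  also have "\<dots> = gsum SigV e1 (\<lambda>x. gsum SigV e (\<lambda>(x, y). smult (f x) (g y)) (Pair x ` Y)) X"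
  proof (rule V.gsum_cong)
    fix x assume "x \<in> X"
    have "smult (f x) (gsum SigV e2 g Y) = gsum SigV e2 (\<lambda>y. smult (f x) (g y)) Y"
      unfolding gsum_def by (rule smult_sum_right[symmetric])
    also have "\<dots> = gsum SigV e (\<lambda>(x, y). smult (f x) (g y)) (Pair x ` Y)"
      using \<open>x \<in> X\<close> i2 ie by (subst V.gsum_reindex) (auto simp: inj_on_def comp_def)
    finally show "smult (f x) (gsum SigV e2 g Y) =
        gsum SigV e (\<lambda>(x, y). smult (f x) (g y)) (Pair x ` Y)" .
  qed
  also have "\<dots> = gsum SigV e (\<lambda>(x, y). smult (f x) (g y)) (\<Union>x\<in>X. Pair x ` Y)"
    using i1 ie by (intro V.gsum_UN_disjoint) (auto simp: U)
  finally show ?thesis by (simp only: U)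
qed

end

section \<open>Walks and infinite paths\<close>

type_synonym 'g vertex = "'g list \<times> nat"

definition edge :: "('g list \<Rightarrow> 'g list \<Rightarrow> nat \<Rightarrow> nat \<Rightarrow> 'a) \<Rightarrow> 'g vertex \<Rightarrow> 'g vertex \<Rightarrow> 'a" where
  "edge M v w = M (fst v) (fst w) (snd v) (snd w)"

fun walk_weight ::
  "('g list \<Rightarrow> 'g list \<Rightarrow> nat \<Rightarrow> nat \<Rightarrow> 'a::monoid_mult) \<Rightarrow> 'g vertex \<Rightarrow> 'g vertex list \<Rightarrow> 'a" where
  "walk_weight M v [] = 1"
| "walk_weight M v (x # xs) = edge M v x * walk_weight M x xs"

text \<open>A walk from v is the list of the vertices after v; only its endpoint may leave the
  state range {1..n}.\<close>

definition walks :: "nat \<Rightarrow> nat \<Rightarrow> 'g vertex \<Rightarrow> 'g vertex \<Rightarrow> 'g vertex list set" where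
  "walks n m v w = {xs. length xs = m \<and> last (v # xs) = w \<and>
     (\<forall>x\<in>set (butlast (v # xs)). snd x \<in> {1..n})}"

definition all_walks :: "nat \<Rightarrow> 'g vertex \<Rightarrow> 'g vertex \<Rightarrow> 'g vertex list set" where
  "all_walks n v w = {xs. last (v # xs) = w \<and> (\<forall>x\<in>set (butlast (v # xs)). snd x \<in> {1..n})}"

lemma walk_weight_snoc: "walk_weight M v (xs @ [w]) = walk_weight M v xs * edge M (last (v # xs)) w"
  by (induction xs arbitrary: v) (auto simp: mult.assoc)

lemma set_Cons_eq_insert_last: "set (v # xs) = insert (last (v # xs)) (set (butlast (v # xs)))"
  by (cases xs rule: rev_cases) auto

lemma all_walks_states:
  assumes "xs \<in> all_walks n v (\<pi>, m)" and "m \<in> {1..n}"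
  shows "\<forall>x\<in>set (v # xs). snd x \<in> {1..n}"
proof
  fix x assume "x \<in> set (v # xs)"
  then have "x = last (v # xs) \<or> x \<in> set (butlast (v # xs))"
    by (simp only: set_Cons_eq_insert_last insert_iff)
  with assms show "snd x \<in> {1..n}" by (auto simp: all_walks_def simp del: last.simps butlast.simps)
qed

lemma walks_Suc:
  "walks n (Suc m) v w = (\<Union>u\<in>UNIV \<times> {1..n}. (\<lambda>xs. xs @ [w]) ` walks n m v u)"
proof (intro set_eqI iffI)
  fix ys assume "ys \<in> (\<Union>u\<in>UNIV \<times> {1..n}. (\<lambda>xs. xs @ [w]) ` walks n m v u)"
  then obtain u xs where u: "u \<in> UNIV \<times> {1..n}" "xs \<in> walks n m v u" "ys = xs @ [w]"
    by auto
  have "\<forall>x\<in>set (v # xs). snd x \<in> {1..n}"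
    using u(1,2) unfolding set_Cons_eq_insert_last[of v xs]
    by (auto simp: walks_def simp del: last.simps butlast.simps)
  with u show "ys \<in> walks n (Suc m) v w" by (simp add: walks_def butlast_append)
next
  fix ys assume ys: "ys \<in> walks n (Suc m) v w"
  define xs where "xs = butlast ys"
  from ys have "ys \<noteq> []" and "last ys = w" by (auto simp: walks_def)
  then have xs: "ys = xs @ [w]" unfolding xs_def by (metis append_butlast_last_id)
  with ys have st: "\<forall>x\<in>set (v # xs). snd x \<in> {1..n}" and len: "length xs = m"
    by (simp_all add: walks_def butlast_append)
  have "\<forall>x\<in>set (butlast (v # xs)). snd x \<in> {1..n}"
    using st in_set_butlastD by fast
  with len have W: "xs \<in> walks n m v (last (v # xs))" by (simp add: walks_def)
  have U: "last (v # xs) \<in> UNIV \<times> {1..n}"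
    using st last_in_set[of "v # xs"] by (simp add: mem_Times_iff)
  show "ys \<in> (\<Union>u\<in>UNIV \<times> {1..n}. (\<lambda>xs. xs @ [w]) ` walks n m v u)"
    unfolding xs by (rule UN_I[OF U]) (rule imageI[OF W])
qed

lemma mat_pow_eq_walks:
  fixes M :: "'g::countable list \<Rightarrow> 'g list \<Rightarrow> nat \<Rightarrow> nat \<Rightarrow> 'a::{semiring_0,monoid_mult}"
  assumes "complete_semiring SigS"
  shows "mat_pow SigS n M m \<pi>1 \<pi>2 a b =
    gsum SigS encc (walk_weight M (\<pi>1, a)) (walks n m (\<pi>1, a) (\<pi>2, b))"
proof (induction m arbitrary: \<pi>2 b)
  interpret S: complete_sum SigS using complete_semiringD(1)[OF assms] .
  case 0
  have "walks n 0 (\<pi>1, a) (\<pi>2, b) = (if \<pi>1 = \<pi>2 \<and> a = b then {[]} else {})"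
    by (auto simp: walks_def)
  then show ?case by (simp add: S.gsum_singleton S.gsum_empty)
next
  interpret S: complete_sum SigS using complete_semiringD(1)[OF assms] .
  case (Suc m)
  define v where "v = (\<pi>1, a)"
  have step: "mat_pow SigS n M m \<pi>1 \<pi> a k * M \<pi> \<pi>2 k b =
      gsum SigS encc (walk_weight M v) ((\<lambda>xs. xs @ [(\<pi>2, b)]) ` walks n m v (\<pi>, k))" for \<pi> k
  proof -
    have "gsum SigS encc (walk_weight M v) ((\<lambda>xs. xs @ [(\<pi>2, b)]) ` walks n m v (\<pi>, k)) =
        gsum SigS encc (walk_weight M v \<circ> (\<lambda>xs. xs @ [(\<pi>2, b)])) (walks n m v (\<pi>, k))"
      by (rule S.gsum_reindex[OF _ inj_on_encc inj_on_encc]) (simp add: inj_on_def)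
    also have "\<dots> = gsum SigS encc (\<lambda>xs. walk_weight M v xs * M \<pi> \<pi>2 k b) (walks n m v (\<pi>, k))"
      by (rule S.gsum_cong) (simp add: walk_weight_snoc walks_def edge_def del: last.simps)
    also have "\<dots> = gsum SigS encc (walk_weight M v) (walks n m v (\<pi>, k)) * M \<pi> \<pi>2 k b"
      unfolding gsum_def by (rule complete_semiringD(2)[OF assms])
    finally show ?thesis by (simp add: Suc.IH v_def)
  qed
  have "mat_pow SigS n M (Suc m) \<pi>1 \<pi>2 a b = gsum SigS encc
      (\<lambda>u. gsum SigS encc (walk_weight M v) ((\<lambda>xs. xs @ [(\<pi>2, b)]) ` walks n m v u)) (UNIV \<times> {1..n})"
    unfolding mat_pow.simps mat_mult_def by (rule S.gsum_cong) (simp add: step split: prod.split)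
  also have "\<dots> = gsum SigS encc (walk_weight M v) (walks n (Suc m) v (\<pi>2, b))"
    unfolding walks_Suc by (rule S.gsum_UN_disjoint) (auto simp: inj_on_encc walks_def)
  finally show ?case by (simp add: v_def)
qed

lemma mat_star_eq_walks:
  fixes M :: "'g::countable list \<Rightarrow> 'g list \<Rightarrow> nat \<Rightarrow> nat \<Rightarrow> 'a::{semiring_0,monoid_mult}"
  assumes "complete_semiring SigS"
  shows "mat_star SigS n M \<pi>1 \<pi>2 a b =
    gsum SigS encc (walk_weight M (\<pi>1, a)) (all_walks n (\<pi>1, a) (\<pi>2, b))"
proof -
  interpret S: complete_sum SigS using complete_semiringD(1)[OF assms] .
  have "mat_star SigS n M \<pi>1 \<pi>2 a b = gsum SigS encc
      (\<lambda>m. gsum SigS encc (walk_weight M (\<pi>1, a)) (walks n m (\<pi>1, a) (\<pi>2, b))) UNIV"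
    unfolding mat_star_def by (rule S.gsum_cong) (simp add: mat_pow_eq_walks[OF assms])
  also have "\<dots> = gsum SigS encc (walk_weight M (\<pi>1, a)) (\<Union>m. walks n m (\<pi>1, a) (\<pi>2, b))"
    by (rule S.gsum_UN_disjoint) (auto simp: inj_on_encc walks_def)
  also have "(\<Union>m. walks n m (\<pi>1, a) (\<pi>2, b)) = all_walks n (\<pi>1, a) (\<pi>2, b)"
    by (auto simp: walks_def all_walks_def)
  finally show ?thesis .
qed

text \<open>An infinite path from v is encoded by the sequence q of the vertices after v.\<close>

definition run :: "'g vertex \<Rightarrow> (nat \<Rightarrow> 'g vertex) \<Rightarrow> nat \<Rightarrow> 'g vertex" where
  "run v q t = (if t = 0 then v else q (t - 1))"

definition run_weight ::
  "((nat \<Rightarrow> 'a) \<Rightarrow> 'v) \<Rightarrow> ('g list \<Rightarrow> 'g list \<Rightarrow> nat \<Rightarrow> nat \<Rightarrow> 'a) \<Rightarrow> 'g vertex \<Rightarrow> (nat \<Rightarrow> 'g vertex) \<Rightarrow> 'v"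
  where "run_weight iprod M v q = iprod (\<lambda>t. edge M (run v q t) (run v q (Suc t)))"

definition runs :: "nat \<Rightarrow> nat \<Rightarrow> (nat \<Rightarrow> 'g vertex) set" where
  "runs n l = {q. (\<forall>t. snd (q t) \<in> {1..n}) \<and> infinite {t. snd (q t) \<le> l}}"

lemma omega_l_eq_runs:
  "omega_l SigV iprod n M l \<pi> i = gsum SigV encs (run_weight iprod M (\<pi>, i)) (runs n l)"
  unfolding omega_l_def run_weight_def runs_def run_def edge_def Let_def by simp

definition append_run :: "'g vertex list \<Rightarrow> (nat \<Rightarrow> 'g vertex) \<Rightarrow> nat \<Rightarrow> 'g vertex" where
  "append_run ys r t = (if t < length ys then ys ! t else r (t - length ys))"

lemma run_append_run_le: "t \<le> length ys \<Longrightarrow> run v (append_run ys r) t = (v # ys) ! t"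
  unfolding run_def append_run_def by (cases t) auto

lemma run_append_run_ge: "run v (append_run ys r) (t + length ys) = run (last (v # ys)) r t"
  unfolding run_def append_run_def
  by (cases t; cases ys rule: rev_cases) (auto simp: nth_append)

lemma prod_list_edges_eq_walk_weight:
  "prod_list (map (\<lambda>t. edge M ((v # ys) ! t) ((v # ys) ! Suc t)) [0..<length ys]) = walk_weight M v ys"
proof (induction ys arbitrary: v)
  case Nil
  then show ?case by simp
next
  case (Cons x ys)
  have "[0..<length (x # ys)] = 0 # map Suc [0..<length ys]"
    by (simp only: length_Cons upt_conv_Cons[OF zero_less_Suc] map_Suc_upt)
  with Cons[of x] show ?case by (simp add: comp_def)
qed

lemma (in complete_pair) run_weight_append_run:
  "run_weight iprod M v (append_run ys r) =
    smult (walk_weight M v ys) (run_weight iprod M (last (v # ys)) r)"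
proof -
  define w where "w = (\<lambda>t. edge M (run v (append_run ys r) t) (run v (append_run ys r) (Suc t)))"
  have "map w [0..<length ys] = map (\<lambda>t. edge M ((v # ys) ! t) ((v # ys) ! Suc t)) [0..<length ys]"
    by (rule map_cong) (auto simp: w_def run_append_run_le simp del: nth_Cons_Suc)
  then have prod: "prod_list (map w [0..<length ys]) = walk_weight M v ys"
    by (simp only: prod_list_edges_eq_walk_weight)
  have tail: "(\<lambda>t. w (t + length ys)) =
      (\<lambda>t. edge M (run (last (v # ys)) r t) (run (last (v # ys)) r (Suc t)))"
    using run_append_run_ge[of v ys r] by (auto simp: w_def fun_eq_iff) (metis add_Suc run_append_run_ge)
  show ?thesis
    unfolding run_weight_def w_def[symmetric] iprod_split[of w "length ys"] prod tail ..
qed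

lemma infinite_Collect_shift: "infinite {t. P (t + c)} \<longleftrightarrow> infinite {t::nat. P t}"
  using eventually_sequentially_seg[of "\<lambda>t. \<not> P t" c]
  by (simp add: frequently_cofinite[symmetric] cofinite_eq_sequentially frequently_def)

section \<open>Stack discipline\<close>

definition stack_step :: "'g list \<Rightarrow> 'g list \<Rightarrow> bool" where
  "stack_step a b \<longleftrightarrow> a \<noteq> [] \<and> (\<exists>\<pi>. b = \<pi> @ tl a)"

lemma stack_step_nonempty: "stack_step a b \<Longrightarrow> a \<noteq> []"
  unfolding stack_step_def by blast

lemma stack_step_append: "stack_step a b \<Longrightarrow> stack_step (a @ s) (b @ s)"
  unfolding stack_step_def by auto

lemma stack_step_append_cancel: "stack_step (a @ s) (b @ s) \<Longrightarrow> a \<noteq> [] \<Longrightarrow> stack_step a b"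
  unfolding stack_step_def by auto

lemma pushdown_tm_append_stack:
  assumes pd: "pushdown_tm n M" and "stack_step a b" and x: "x \<in> {1..n}" and y: "y \<in> {1..n}"
  shows "M (a @ s) (b @ s) x y = M a b x y"
proof -
  obtain p a' \<pi> where a: "a = p # a'" and b: "b = \<pi> @ a'"
    using assms(2) unfolding stack_step_def by (metis list.collapse list.sel(3))
  have "M (p # (a' @ s)) (\<pi> @ (a' @ s)) x y = M [p] \<pi> x y"
    and "M (p # a') (\<pi> @ a') x y = M [p] \<pi> x y"
    using pd x y unfolding pushdown_tm_def by blast+
  with a b show ?thesis by simp
qed

lemma pushdown_tm_not_step:
  assumes pd: "pushdown_tm n M" and "\<not> stack_step a b" and x: "x \<in> {1..n}" and y: "y \<in> {1..n}"
  shows "M a b x y = 0"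
proof -
  have "\<nexists>p \<pi> \<pi>'. a = p # \<pi>' \<and> b = \<pi> @ \<pi>'" using assms(2) unfolding stack_step_def by auto
  with pd x y show ?thesis unfolding pushdown_tm_def by blast
qed

definition lift_stack :: "'g list \<Rightarrow> 'g vertex \<Rightarrow> 'g vertex" where
  "lift_stack s v = (fst v @ s, snd v)"

definition unlift_stack :: "'g list \<Rightarrow> 'g vertex \<Rightarrow> 'g vertex" where
  "unlift_stack s v = (take (length (fst v) - length s) (fst v), snd v)"

lemma unlift_stack_append: "fst v = \<beta> @ s \<Longrightarrow> unlift_stack s v = (\<beta>, snd v)"
  unfolding unlift_stack_def by simp

lemma lift_unlift_stack: "fst v = \<beta> @ s \<Longrightarrow> lift_stack s (unlift_stack s v) = v"
  unfolding unlift_stack_def lift_stack_def by (cases v) simp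

lemma unlift_lift_stack: "unlift_stack s (lift_stack s v) = v"
  unfolding unlift_stack_def lift_stack_def by simp

definition stack_walk :: "'g vertex \<Rightarrow> 'g vertex list \<Rightarrow> bool" where
  "stack_walk v xs \<longleftrightarrow> (\<forall>t<length xs. stack_step (fst ((v # xs) ! t)) (fst ((v # xs) ! Suc t)))"

lemma stack_walk_Nil [simp]: "stack_walk v []"
  by (simp add: stack_walk_def)

lemma stack_walk_Cons [simp]: "stack_walk v (x # xs) \<longleftrightarrow> stack_step (fst v) (fst x) \<and> stack_walk x xs"
  unfolding stack_walk_def by (auto simp: less_Suc_eq_0_disj)

definition stack_run :: "'g vertex \<Rightarrow> (nat \<Rightarrow> 'g vertex) \<Rightarrow> bool" where
  "stack_run v q \<longleftrightarrow> (\<forall>t. stack_step (fst (run v q t)) (fst (run v q (Suc t))))"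

lemma walk_weight_eq_0:
  fixes M :: "'g list \<Rightarrow> 'g list \<Rightarrow> nat \<Rightarrow> nat \<Rightarrow> 'a::{semiring_0,monoid_mult}"
  assumes pd: "pushdown_tm n M"
  shows "\<forall>x\<in>set (v # xs). snd x \<in> {1..n} \<Longrightarrow> \<not> stack_walk v xs \<Longrightarrow> walk_weight M v xs = 0"
proof (induction xs arbitrary: v)
  case Nil
  then show ?case by simp
next
  case (Cons x xs)
  show ?case
  proof (cases "stack_step (fst v) (fst x)")
    case True
    with Cons show ?thesis by simp
  next
    case False
    then have "edge M v x = 0"
      unfolding edge_def using pushdown_tm_not_step[OF pd] Cons.prems by simp
    then show ?thesis by simp
  qed
qed

lemma walk_weight_lift_stack:
  assumes pd: "pushdown_tm n M"
  shows "\<forall>x\<in>set (v # xs). snd x \<in> {1..n} \<Longrightarrow> stack_walk v xs \<Longrightarrow>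
    walk_weight M (lift_stack s v) (map (lift_stack s) xs) = walk_weight M v xs"
proof (induction xs arbitrary: v)
  case Nil
  then show ?case by simp
next
  case (Cons x xs)
  have "edge M (lift_stack s v) (lift_stack s x) = edge M v x"
    unfolding edge_def lift_stack_def using pushdown_tm_append_stack[OF pd] Cons.prems by simp
  with Cons show ?case by simp
qed

lemma run_lift_stack: "run (lift_stack s v) (lift_stack s \<circ> q) t = lift_stack s (run v q t)"
  unfolding run_def by simp

lemma run_states: "snd v \<in> {1..n} \<Longrightarrow> \<forall>t. snd (q t) \<in> {1..n} \<Longrightarrow> snd (run v q t) \<in> {1..n}"
  unfolding run_def by simp

lemma (in complete_pair) run_weight_eq_0:
  assumes pd: "pushdown_tm n M" and "snd v \<in> {1..n}" and "\<forall>t. snd (q t) \<in> {1..n}"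
    and "\<not> stack_run v q"
  shows "run_weight iprod M v q = 0"
proof -
  obtain t where t: "\<not> stack_step (fst (run v q t)) (fst (run v q (Suc t)))"
    using assms(4) unfolding stack_run_def by auto
  have st: "snd (run v q u) \<in> {1..n}" for u using assms(2,3) by (rule run_states)
  show ?thesis
    unfolding run_weight_def by (rule iprod_eq_0[of _ t]) (simp add: edge_def pushdown_tm_not_step[OF pd t st st])
qed

lemma run_weight_lift_stack:
  assumes pd: "pushdown_tm n M" and "snd v \<in> {1..n}" and "\<forall>t. snd (q t) \<in> {1..n}"
    and "stack_run v q"
  shows "run_weight iprod M (lift_stack s v) (lift_stack s \<circ> q) = run_weight iprod M v q"
proof -
  have "edge M (run (lift_stack s v) (lift_stack s \<circ> q) t) (run (lift_stack s v) (lift_stack s \<circ> q) (Suc t))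
      = edge M (run v q t) (run v q (Suc t))" for t
  proof -
    have st: "snd (run v q u) \<in> {1..n}" for u using assms(2,3) by (rule run_states)
    have "stack_step (fst (run v q t)) (fst (run v q (Suc t)))"
      using assms(4) unfolding stack_run_def by blast
    then show ?thesis
      unfolding run_lift_stack unfolding edge_def lift_stack_def
      using pushdown_tm_append_stack[OF pd _ st st] by simp
  qed
  then show ?thesis unfolding run_weight_def by simp
qed

lemma stack_suffix_persists:
  assumes step: "\<And>t. stack_step (\<sigma> t) (\<sigma> (Suc t))" and "\<sigma> t0 = \<alpha> @ s"
    and high: "\<And>t'. t0 \<le> t' \<Longrightarrow> t' < t0 + d \<Longrightarrow> length (\<sigma> t') > length s"
  shows "\<exists>\<beta>. \<sigma> (t0 + d) = \<beta> @ s"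
  using high
proof (induction d)
  case 0
  with assms(2) show ?case by auto
next
  case (Suc d)
  then obtain \<beta> where \<beta>: "\<sigma> (t0 + d) = \<beta> @ s" by auto
  have "length (\<sigma> (t0 + d)) > length s" using Suc.prems by auto
  with \<beta> have "\<beta> \<noteq> []" by auto
  moreover obtain \<pi> where "\<sigma> (Suc (t0 + d)) = \<pi> @ tl (\<sigma> (t0 + d))"
    using step unfolding stack_step_def by blast
  ultimately show ?case using \<beta> by (intro exI[of _ "\<pi> @ tl \<beta>"]) auto
qed

section \<open>Splitting an infinite path at its lowest stack\<close>

locale stack_split =
  fixes n :: nat and M :: "'g list \<Rightarrow> 'g list \<Rightarrow> nat \<Rightarrow> nat \<Rightarrow> 'a::{semiring_0,monoid_mult}"
    and ps :: "'g list" and i l :: nat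
  assumes pd: "pushdown_tm n M" and ps_nonempty: "ps \<noteq> []" and i_range: "i \<in> {1..n}"
begin

definition decomp :: "((nat \<times> nat) \<times> 'g vertex list \<times> (nat \<Rightarrow> 'g vertex)) set" where
  "decomp = Sigma ({1..length ps} \<times> {1..n})
     (\<lambda>(j, m). all_walks n (take (j - 1) ps, i) ([], m) \<times> runs n l)"

definition stack_decomp :: "((nat \<times> nat) \<times> 'g vertex list \<times> (nat \<Rightarrow> 'g vertex)) set" where
  "stack_decomp = {((j, m), xs, q). ((j, m), xs, q) \<in> decomp \<and>
     stack_walk (take (j - 1) ps, i) xs \<and> stack_run ([ps ! (j - 1)], m) q}"

definition stack_runs :: "(nat \<Rightarrow> 'g vertex) set" where
  "stack_runs = {q \<in> runs n l. stack_run (ps, i) q}"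

definition glue :: "(nat \<times> nat) \<times> 'g vertex list \<times> (nat \<Rightarrow> 'g vertex) \<Rightarrow> nat \<Rightarrow> 'g vertex" where
  "glue = (\<lambda>((j, m), xs, q).
     append_run (map (lift_stack (drop (j - 1) ps)) xs) (lift_stack (drop j ps) \<circ> q))"

definition height :: "(nat \<Rightarrow> 'g vertex) \<Rightarrow> nat \<Rightarrow> nat" where
  "height q t = length (fst (run (ps, i) q t))"

definition min_time :: "(nat \<Rightarrow> 'g vertex) \<Rightarrow> nat" where
  "min_time q = (LEAST t. \<forall>t'. height q t \<le> height q t')"

definition split_level :: "(nat \<Rightarrow> 'g vertex) \<Rightarrow> nat" where
  "split_level q = length ps + 1 - height q (min_time q)"

definition split_walk :: "(nat \<Rightarrow> 'g vertex) \<Rightarrow> 'g vertex list" where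
  "split_walk q = map (\<lambda>t. unlift_stack (drop (split_level q - 1) ps) (q t)) [0..<min_time q]"

definition split_run :: "(nat \<Rightarrow> 'g vertex) \<Rightarrow> nat \<Rightarrow> 'g vertex" where
  "split_run q t = unlift_stack (drop (split_level q) ps) (q (min_time q + t))"

definition split ::
  "(nat \<Rightarrow> 'g vertex) \<Rightarrow> (nat \<times> nat) \<times> 'g vertex list \<times> (nat \<Rightarrow> 'g vertex)" where
  "split q = ((split_level q, snd (run (ps, i) q (min_time q))), split_walk q, split_run q)"

lemma drop_pred_eq_Cons:
  assumes "j \<in> {1..length ps}"
  shows "drop (j - 1) ps = ps ! (j - 1) # drop j ps"
proof -
  from assms have "j - 1 < length ps" and "Suc (j - 1) = j" by auto
  then show ?thesis by (metis Cons_nth_drop_Suc)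
qed

lemma lift_stack_take: "lift_stack (drop (j - 1) ps) (take (j - 1) ps, i) = (ps, i)"
  by (simp add: lift_stack_def)

lemma lift_stack_top:
  assumes "j \<in> {1..length ps}"
  shows "lift_stack (drop j ps) ([ps ! (j - 1)], m) = (drop (j - 1) ps, m)"
  unfolding lift_stack_def drop_pred_eq_Cons[OF assms] by simp

context
  fixes j m xs q
  assumes in_stack_decomp: "((j, m), xs, q) \<in> stack_decomp"
begin

lemma stack_decomp_facts:
  shows "j \<in> {1..length ps}" "m \<in> {1..n}" "xs \<in> all_walks n (take (j - 1) ps, i) ([], m)"
    "q \<in> runs n l" "stack_walk (take (j - 1) ps, i) xs" "stack_run ([ps ! (j - 1)], m) q"
  using in_stack_decomp by (auto simp: stack_decomp_def decomp_def)

lemma walk_states: "\<forall>x\<in>set ((take (j - 1) ps, i) # xs). snd x \<in> {1..n}"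
  using all_walks_states[OF stack_decomp_facts(3,2)] .

lemma walk_last: "last ((take (j - 1) ps, i) # xs) = ([], m)"
  using stack_decomp_facts(3) by (simp add: all_walks_def)

lemma walk_nth_length: "((take (j - 1) ps, i) # xs) ! length xs = ([], m)"
  using walk_last last_conv_nth[of "(take (j - 1) ps, i) # xs"] by simp

lemma glue_apply:
  "glue ((j, m), xs, q) t =
    (if t < length xs then lift_stack (drop (j - 1) ps) (xs ! t)
     else lift_stack (drop j ps) (q (t - length xs)))"
  unfolding glue_def append_run_def by simp

lemma run_glue_le:
  assumes "t \<le> length xs"
  shows "run (ps, i) (glue ((j, m), xs, q)) t = lift_stack (drop (j - 1) ps) (((take (j - 1) ps, i) # xs) ! t)"
proof -
  have "run (ps, i) (glue ((j, m), xs, q)) t = ((ps, i) # map (lift_stack (drop (j - 1) ps)) xs) ! t"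
    unfolding glue_def prod.case using assms by (simp only: run_append_run_le length_map)
  also have "\<dots> = map (lift_stack (drop (j - 1) ps)) ((take (j - 1) ps, i) # xs) ! t"
    by (simp only: list.map lift_stack_take)
  also have "\<dots> = lift_stack (drop (j - 1) ps) (((take (j - 1) ps, i) # xs) ! t)"
    by (rule nth_map) (use assms in simp)
  finally show ?thesis .
qed

lemma last_lifted_walk:
  "last ((ps, i) # map (lift_stack (drop (j - 1) ps)) xs) = lift_stack (drop j ps) ([ps ! (j - 1)], m)"
proof -
  have "last ((ps, i) # map (lift_stack (drop (j - 1) ps)) xs) = lift_stack (drop (j - 1) ps) ([], m)"
    using walk_last last_map[of "(take (j - 1) ps, i) # xs" "lift_stack (drop (j - 1) ps)"]
    by (simp only: list.map lift_stack_take) simp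
  also have "\<dots> = lift_stack (drop j ps) ([ps ! (j - 1)], m)"
    using lift_stack_top[OF stack_decomp_facts(1)] by (simp add: lift_stack_def)
  finally show ?thesis .
qed

lemma run_glue_ge:
  "run (ps, i) (glue ((j, m), xs, q)) (t + length xs) = lift_stack (drop j ps) (run ([ps ! (j - 1)], m) q t)"
proof -
  have "run (ps, i) (glue ((j, m), xs, q)) (t + length xs) =
      run (last ((ps, i) # map (lift_stack (drop (j - 1) ps)) xs)) (lift_stack (drop j ps) \<circ> q) t"
    unfolding glue_def prod.case
    using run_append_run_ge[of "(ps, i)" "map (lift_stack (drop (j - 1) ps)) xs"]
    by (simp only: length_map)
  then show ?thesis by (simp only: last_lifted_walk run_lift_stack)
qed

lemma glue_in_stack_runs: "glue ((j, m), xs, q) \<in> stack_runs"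
proof -
  let ?q = "glue ((j, m), xs, q)"
  have states: "\<forall>t. snd (q t) \<in> {1..n}" and inf: "infinite {t. snd (q t) \<le> l}"
    using stack_decomp_facts(4) by (auto simp: runs_def)
  have "snd (?q t) \<in> {1..n}" for t
    using walk_states states by (auto simp: glue_apply lift_stack_def)
  moreover have "{t. snd (?q (t + length xs)) \<le> l} = {t. snd (q t) \<le> l}"
    by (simp add: glue_apply lift_stack_def)
  then have "infinite {t. snd (?q t) \<le> l}"
    using inf infinite_Collect_shift[of "\<lambda>t. snd (?q t) \<le> l" "length xs"] by simp
  moreover have "stack_run (ps, i) ?q" unfolding stack_run_def
  proof
    fix t
    show "stack_step (fst (run (ps, i) ?q t)) (fst (run (ps, i) ?q (Suc t)))"
    proof (cases "t < length xs")
      case True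
      then have "stack_step (fst (((take (j - 1) ps, i) # xs) ! t)) (fst (((take (j - 1) ps, i) # xs) ! Suc t))"
        using stack_decomp_facts(5) unfolding stack_walk_def by blast
      with True show ?thesis by (simp add: run_glue_le lift_stack_def stack_step_append)
    next
      case False
      then obtain u where u: "t = u + length xs" by (metis add.commute le_Suc_ex not_less)
      have "stack_step (fst (run ([ps ! (j - 1)], m) q u)) (fst (run ([ps ! (j - 1)], m) q (Suc u)))"
        using stack_decomp_facts(6) unfolding stack_run_def by blast
      then show ?thesis
        using run_glue_ge[of u] run_glue_ge[of "Suc u"] u by (simp add: lift_stack_def stack_step_append)
    qed
  qed
  ultimately show ?thesis by (simp add: stack_runs_def runs_def)
qed

lemma height_glue_before: "t < length xs \<Longrightarrow> height (glue ((j, m), xs, q)) t > length ps - (j - 1)"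
  using stack_step_nonempty stack_decomp_facts(5)
  by (fastforce simp: height_def run_glue_le lift_stack_def stack_walk_def)

lemma height_glue_at: "height (glue ((j, m), xs, q)) (length xs) = length ps - (j - 1)"
  unfolding height_def run_glue_le[OF order_refl] walk_nth_length by (simp add: lift_stack_def)

lemma height_glue_after: "height (glue ((j, m), xs, q)) (u + length xs) \<ge> length ps - (j - 1)"
proof -
  have "fst (run ([ps ! (j - 1)], m) q u) \<noteq> []"
    using stack_decomp_facts(6) stack_step_nonempty unfolding stack_run_def by blast
  then show ?thesis
    using stack_decomp_facts(1) by (cases "fst (run ([ps ! (j - 1)], m) q u)")
      (auto simp: height_def run_glue_ge lift_stack_def)
qed

lemma min_time_glue: "min_time (glue ((j, m), xs, q)) = length xs"
  unfolding min_time_def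
proof (rule Least_equality)
  let ?h = "height (glue ((j, m), xs, q))"
  show "\<forall>t'. ?h (length xs) \<le> ?h t'"
  proof
    fix t'
    show "?h (length xs) \<le> ?h t'"
    proof (cases "t' < length xs")
      case True
      then show ?thesis using height_glue_before height_glue_at by fastforce
    next
      case False
      then obtain u where "t' = u + length xs" by (metis add.commute le_Suc_ex not_less)
      then show ?thesis using height_glue_at height_glue_after by simp
    qed
  qed
  show "length xs \<le> y" if "\<forall>t'. ?h y \<le> ?h t'" for y
  proof (rule ccontr)
    assume "\<not> length xs \<le> y"
    then have "?h y > ?h (length xs)" using height_glue_before height_glue_at by simp
    with that show False by (meson leD)
  qed
qed

lemma split_glue: "split (glue ((j, m), xs, q)) = ((j, m), xs, q)"
proof -
  let ?q = "glue ((j, m), xs, q)"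
  have j: "split_level ?q = j"
    unfolding split_level_def min_time_glue height_glue_at using stack_decomp_facts(1) by auto
  have "snd (run (ps, i) ?q (min_time ?q)) = m"
    unfolding min_time_glue run_glue_le[OF order_refl] walk_nth_length by (simp add: lift_stack_def)
  moreover have "split_walk ?q = xs"
    unfolding split_walk_def j min_time_glue
    by (rule nth_equalityI) (simp_all add: glue_apply unlift_lift_stack)
  moreover have "split_run ?q = q"
    unfolding split_run_def j min_time_glue by (simp add: glue_apply unlift_lift_stack)
  ultimately show ?thesis unfolding split_def j by simp
qed

end

context
  fixes q
  assumes in_stack_runs: "q \<in> stack_runs"
begin

lemma stack_runs_facts: "\<forall>t. snd (q t) \<in> {1..n}" "infinite {t. snd (q t) \<le> l}" "stack_run (ps, i) q"
  using in_stack_runs by (auto simp: stack_runs_def runs_def)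

abbreviation stack :: "nat \<Rightarrow> 'g list" where
  "stack t \<equiv> fst (run (ps, i) q t)"

lemma stack_step_run: "stack_step (stack t) (stack (Suc t))"
  using stack_runs_facts(3) unfolding stack_run_def by blast

lemma height_pos: "height q t \<ge> 1"
  using stack_step_nonempty[OF stack_step_run] unfolding height_def by (cases "stack t") auto

lemma height_min_time: "height q (min_time q) \<le> height q t"
proof -
  have "\<exists>t. \<forall>t'. height q t \<le> height q t'"
    using ex_has_least_nat[of "\<lambda>_. True" 0 "height q"] by auto
  then have "\<forall>t'. height q (min_time q) \<le> height q t'"
    unfolding min_time_def by (rule LeastI_ex)
  then show ?thesis ..
qed

lemma height_before_min_time: "t < min_time q \<Longrightarrow> height q t > height q (min_time q)"
  using not_less_Least[of t "\<lambda>t. \<forall>t'. height q t \<le> height q t'"] height_min_time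
  unfolding min_time_def[symmetric] by (meson le_less_trans not_le)

lemma height_min_time_le: "height q (min_time q) \<le> length ps"
  using height_min_time[of 0] by (simp add: height_def run_def)

lemma split_level_range: "split_level q \<in> {1..length ps}"
  using height_min_time_le height_pos[of "min_time q"] unfolding split_level_def by auto

lemma length_drop_split_level: "length (drop (split_level q - 1) ps) = height q (min_time q)"
  using height_min_time_le height_pos[of "min_time q"] unfolding split_level_def by auto

lemma stack_before_min_time:
  assumes "d \<le> min_time q"
  shows "\<exists>\<beta>. stack d = \<beta> @ drop (split_level q - 1) ps"
proof -
  have "\<exists>\<beta>. stack (0 + d) = \<beta> @ drop (split_level q - 1) ps"
  proof (rule stack_suffix_persists[where \<sigma> = stack])
    show "stack 0 = take (split_level q - 1) ps @ drop (split_level q - 1) ps"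
      by (simp add: run_def)
    fix t' assume "0 \<le> t'" "t' < 0 + d"
    with assms have "height q t' > height q (min_time q)" by (simp add: height_before_min_time)
    then show "length (drop (split_level q - 1) ps) < length (stack t')"
      using length_drop_split_level unfolding height_def by simp
  qed (rule stack_step_run)
  then show ?thesis by simp
qed

lemma stack_at_min_time: "stack (min_time q) = drop (split_level q - 1) ps"
proof -
  obtain \<beta> where \<beta>: "stack (min_time q) = \<beta> @ drop (split_level q - 1) ps"
    using stack_before_min_time by blast
  then have "\<beta> = []" using length_drop_split_level unfolding height_def by simp
  with \<beta> show ?thesis by simp
qed

lemma stack_before_min_time_nonempty:
  "d < min_time q \<Longrightarrow> stack d = \<beta> @ drop (split_level q - 1) ps \<Longrightarrow> \<beta> \<noteq> []"
  using height_before_min_time[of d] length_drop_split_level unfolding height_def by auto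

lemma stack_after_min_time: "\<exists>\<beta>. stack (min_time q + d) = \<beta> @ drop (split_level q) ps \<and> \<beta> \<noteq> []"
proof -
  have len: "length (drop (split_level q) ps) = height q (min_time q) - 1"
    using length_drop_split_level split_level_range by simp
  have "\<exists>\<beta>. stack (min_time q + d) = \<beta> @ drop (split_level q) ps"
  proof (rule stack_suffix_persists[where \<sigma> = stack])
    show "stack (min_time q) = [ps ! (split_level q - 1)] @ drop (split_level q) ps"
      using stack_at_min_time drop_pred_eq_Cons[OF split_level_range] by simp
    fix t'
    show "length (drop (split_level q) ps) < length (stack t')"
      using len height_min_time[of t'] height_pos[of "min_time q"] unfolding height_def by simp
  qed (rule stack_step_run)
  then obtain \<beta> where \<beta>: "stack (min_time q + d) = \<beta> @ drop (split_level q) ps" by blast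
  then have "\<beta> \<noteq> []"
    using len height_min_time[of "min_time q + d"] height_pos[of "min_time q"]
    unfolding height_def by auto
  with \<beta> show ?thesis by blast
qed

lemma split_walk_nth:
  assumes "t \<le> min_time q"
  shows "((take (split_level q - 1) ps, i) # split_walk q) ! t =
    unlift_stack (drop (split_level q - 1) ps) (run (ps, i) q t)"
proof (cases t)
  case 0
  then show ?thesis
    using unlift_stack_append[of "(ps, i)" "take (split_level q - 1) ps" "drop (split_level q - 1) ps"]
    by (simp add: run_def)
next
  case (Suc t')
  with assms show ?thesis by (simp add: run_def split_walk_def)
qed

lemma run_split_run:
  "run ([ps ! (split_level q - 1)], snd (run (ps, i) q (min_time q))) (split_run q) t =
    unlift_stack (drop (split_level q) ps) (run (ps, i) q (min_time q + t))"
proof (cases t)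
  case 0
  have "stack (min_time q) = [ps ! (split_level q - 1)] @ drop (split_level q) ps"
    using stack_at_min_time drop_pred_eq_Cons[OF split_level_range] by simp
  with 0 show ?thesis by (simp add: run_def unlift_stack_append)
next
  case (Suc t')
  then show ?thesis by (simp add: run_def split_run_def)
qed

lemma split_walk_in_all_walks:
  "split_walk q \<in> all_walks n (take (split_level q - 1) ps, i) ([], snd (run (ps, i) q (min_time q)))"
proof -
  have "last ((take (split_level q - 1) ps, i) # split_walk q) =
      ((take (split_level q - 1) ps, i) # split_walk q) ! min_time q"
    by (simp add: last_conv_nth split_walk_def)
  also have "\<dots> = unlift_stack (drop (split_level q - 1) ps) (run (ps, i) q (min_time q))"
    by (rule split_walk_nth) simp
  also have "\<dots> = ([], snd (run (ps, i) q (min_time q)))"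
    by (rule unlift_stack_append) (simp add: stack_at_min_time)
  finally have last: "last ((take (split_level q - 1) ps, i) # split_walk q) =
      ([], snd (run (ps, i) q (min_time q)))" .
  have "\<forall>x\<in>set ((take (split_level q - 1) ps, i) # split_walk q). snd x \<in> {1..n}"
    using i_range stack_runs_facts(1) by (auto simp: split_walk_def unlift_stack_def)
  then have "\<forall>x\<in>set (butlast ((take (split_level q - 1) ps, i) # split_walk q)). snd x \<in> {1..n}"
    using in_set_butlastD by fast
  with last show ?thesis unfolding all_walks_def by blast
qed

lemma stack_walk_split_walk: "stack_walk (take (split_level q - 1) ps, i) (split_walk q)"
  unfolding stack_walk_def
proof (intro allI impI)
  let ?s = "drop (split_level q - 1) ps" and ?w = "(take (split_level q - 1) ps, i) # split_walk q"
  fix t assume t: "t < length (split_walk q)"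
  then have t': "t < min_time q" by (simp add: split_walk_def)
  obtain \<beta> \<beta>' where \<beta>: "stack t = \<beta> @ ?s" and \<beta>': "stack (Suc t) = \<beta>' @ ?s"
    using stack_before_min_time[of t] stack_before_min_time[of "Suc t"] t' by auto
  have "stack_step \<beta> \<beta>'"
    using stack_step_run[of t] stack_before_min_time_nonempty[OF t' \<beta>]
    unfolding \<beta> \<beta>' by (rule stack_step_append_cancel)
  moreover have "fst (?w ! t) = \<beta>"
    unfolding split_walk_nth[OF less_imp_le[OF t']] unlift_stack_append[OF \<beta>] by simp
  moreover have "fst (?w ! Suc t) = \<beta>'"
    unfolding split_walk_nth[OF Suc_leI[OF t']] unlift_stack_append[OF \<beta>'] by simp
  ultimately show "stack_step (fst (?w ! t)) (fst (?w ! Suc t))" by simp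
qed

lemma split_run_in_runs: "split_run q \<in> runs n l"
proof -
  have "{t. snd (split_run q t) \<le> l} = {t. snd (q (t + min_time q)) \<le> l}"
    by (simp add: split_run_def unlift_stack_def add.commute)
  then show ?thesis
    using stack_runs_facts(1,2) infinite_Collect_shift[of "\<lambda>t. snd (q t) \<le> l" "min_time q"]
    by (simp add: runs_def split_run_def unlift_stack_def)
qed

lemma stack_run_split_run:
  "stack_run ([ps ! (split_level q - 1)], snd (run (ps, i) q (min_time q))) (split_run q)"
  unfolding stack_run_def run_split_run
proof
  fix t
  let ?s = "drop (split_level q) ps"
  obtain \<beta> where \<beta>: "stack (min_time q + t) = \<beta> @ ?s" "\<beta> \<noteq> []"
    using stack_after_min_time by blast
  obtain \<beta>' where \<beta>': "stack (min_time q + Suc t) = \<beta>' @ ?s"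
    using stack_after_min_time by blast
  have "stack_step \<beta> \<beta>'"
    using stack_step_run[of "min_time q + t"] \<beta>(2) unfolding \<beta>(1) add_Suc_right[symmetric] \<beta>'
    by (rule stack_step_append_cancel)
  then show "stack_step (fst (unlift_stack ?s (run (ps, i) q (min_time q + t))))
      (fst (unlift_stack ?s (run (ps, i) q (min_time q + Suc t))))"
    using \<beta>(1) \<beta>' by (simp add: unlift_stack_append)
qed

lemma split_in_stack_decomp: "split q \<in> stack_decomp"
  using split_level_range stack_runs_facts(1) i_range split_walk_in_all_walks split_run_in_runs
    stack_walk_split_walk stack_run_split_run
  by (simp add: split_def stack_decomp_def decomp_def run_def)

lemma glue_split: "glue (split q) = q"
proof
  fix t
  show "glue (split q) t = q t"
  proof (cases "t < min_time q")
    case True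
    obtain \<beta> where "stack (Suc t) = \<beta> @ drop (split_level q - 1) ps"
      using stack_before_min_time[of "Suc t"] True by auto
    then have "lift_stack (drop (split_level q - 1) ps) (unlift_stack (drop (split_level q - 1) ps) (q t)) = q t"
      by (intro lift_unlift_stack) (simp add: run_def)
    with True show ?thesis by (simp add: split_def glue_def append_run_def split_walk_def)
  next
    case False
    then obtain d where d: "t = min_time q + d" by (metis le_Suc_ex not_less)
    obtain \<beta> where "stack (min_time q + Suc d) = \<beta> @ drop (split_level q) ps"
      using stack_after_min_time by blast
    then have "lift_stack (drop (split_level q) ps) (unlift_stack (drop (split_level q) ps) (q t)) = q t"
      by (intro lift_unlift_stack) (simp add: run_def d)
    with False d show ?thesis by (simp add: split_def glue_def append_run_def split_walk_def split_run_def)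
  qed
qed

end

lemma bij_betw_glue: "bij_betw glue stack_decomp stack_runs"
proof (rule bij_betw_byWitness[where f' = split])
  show "\<forall>\<tau>\<in>stack_decomp. split (glue \<tau>) = \<tau>" using split_glue by auto
  show "\<forall>q\<in>stack_runs. glue (split q) = q" using glue_split by auto
  show "glue ` stack_decomp \<subseteq> stack_runs" using glue_in_stack_runs by auto
  show "split ` stack_runs \<subseteq> stack_decomp" using split_in_stack_decomp by auto
qed

end

section \<open>The decomposition of the infinite-path weights\<close>

definition enc_decomp :: "'c::countable \<times> 'd::countable \<times> (nat \<Rightarrow> 'e::countable) \<Rightarrow> idx" where
  "enc_decomp = (\<lambda>(a, x, q) t. case t of 0 \<Rightarrow> to_nat (a, x) | Suc t' \<Rightarrow> to_nat (q t'))"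

lemma inj_enc_decomp: "inj (enc_decomp :: 'c::countable \<times> 'd::countable \<times> (nat \<Rightarrow> 'e::countable) \<Rightarrow> idx)"
proof (rule injI)
  fix u u' :: "'c::countable \<times> 'd::countable \<times> (nat \<Rightarrow> 'e::countable)"
  assume eq: "enc_decomp u = enc_decomp u'"
  obtain a x q a' x' q' where u: "u = (a, x, q)" and u': "u' = (a', x', q')" by (metis prod.collapse)
  from fun_cong[OF eq, of 0] have "(a, x) = (a', x')" by (simp add: enc_decomp_def u u' to_nat_split)
  moreover have "q t = q' t" for t
    using fun_cong[OF eq, of "Suc t"] by (simp add: enc_decomp_def u u' to_nat_split)
  ultimately show "u = u'" by (simp add: u u' fun_eq_iff)
qed

lemma inj_on_enc_decomp_Pair:
  fixes a :: "'c::countable"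
  shows "inj_on (\<lambda>b. enc_decomp (a, b)) (B :: ('d::countable \<times> (nat \<Rightarrow> 'e::countable)) set)"
proof (rule inj_onI)
  fix b b' :: "'d \<times> (nat \<Rightarrow> 'e)" assume "enc_decomp (a, b) = enc_decomp (a, b')"
  then have "(a, b) = (a, b')" by (rule injD[OF inj_enc_decomp])
  then show "b = b'" by simp
qed

locale pushdown_omega = complete_pair SigS SigV smult iprod + stack_split n M ps i l
  for SigS :: "(idx \<Rightarrow> 'a::{semiring_0,monoid_mult}) \<Rightarrow> idx set \<Rightarrow> 'a"
    and SigV :: "(idx \<Rightarrow> 'v::comm_monoid_add) \<Rightarrow> idx set \<Rightarrow> 'v"
    and smult iprod n
    and M :: "'g::countable list \<Rightarrow> 'g list \<Rightarrow> nat \<Rightarrow> nat \<Rightarrow> 'a"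
    and ps i l
begin

definition decomp_weight :: "(nat \<times> nat) \<times> 'g vertex list \<times> (nat \<Rightarrow> 'g vertex) \<Rightarrow> 'v" where
  "decomp_weight = (\<lambda>((j, m), xs, q).
     smult (walk_weight M (take (j - 1) ps, i) xs) (run_weight iprod M ([ps ! (j - 1)], m) q))"

lemma run_weight_glue:
  assumes "((j, m), xs, q) \<in> stack_decomp"
  shows "run_weight iprod M (ps, i) (glue ((j, m), xs, q)) = decomp_weight ((j, m), xs, q)"
proof -
  note facts = stack_decomp_facts[OF assms]
  have "walk_weight M (ps, i) (map (lift_stack (drop (j - 1) ps)) xs) = walk_weight M (take (j - 1) ps, i) xs"
    using walk_weight_lift_stack[OF pd walk_states[OF assms] facts(5), of "drop (j - 1) ps"]
    by (simp only: lift_stack_take)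
  moreover have "run_weight iprod M (lift_stack (drop j ps) ([ps ! (j - 1)], m)) (lift_stack (drop j ps) \<circ> q)
      = run_weight iprod M ([ps ! (j - 1)], m) q"
    using facts by (intro run_weight_lift_stack[OF pd]) (auto simp: runs_def)
  ultimately show ?thesis
    unfolding glue_def prod.case run_weight_append_run last_lifted_walk[OF assms] decomp_weight_def
    by simp
qed

lemma decomp_weight_eq_0:
  assumes "\<tau> \<in> decomp - stack_decomp"
  shows "decomp_weight \<tau> = 0"
proof -
  obtain j m xs q where \<tau>: "\<tau> = ((j, m), xs, q)" by (metis prod.collapse)
  have jm: "m \<in> {1..n}" and xs: "xs \<in> all_walks n (take (j - 1) ps, i) ([], m)"
    and q: "q \<in> runs n l"
    using assms by (auto simp: \<tau> decomp_def)
  have "\<not> stack_walk (take (j - 1) ps, i) xs \<or> \<not> stack_run ([ps ! (j - 1)], m) q"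
    using assms by (auto simp: \<tau> stack_decomp_def)
  then show ?thesis
  proof
    assume "\<not> stack_walk (take (j - 1) ps, i) xs"
    then have "walk_weight M (take (j - 1) ps, i) xs = 0"
      using walk_weight_eq_0[OF pd all_walks_states[OF xs jm]] by blast
    then show ?thesis by (simp add: \<tau> decomp_weight_def smult_zero_left)
  next
    assume "\<not> stack_run ([ps ! (j - 1)], m) q"
    then have "run_weight iprod M ([ps ! (j - 1)], m) q = 0"
      using jm q by (intro run_weight_eq_0[OF pd]) (auto simp: runs_def)
    then show ?thesis by (simp add: \<tau> decomp_weight_def smult_zero_right)
  qed
qed

lemma run_weight_not_stack_run:
  "q \<in> runs n l - stack_runs \<Longrightarrow> run_weight iprod M (ps, i) q = 0"
  using i_range by (intro run_weight_eq_0[OF pd]) (auto simp: runs_def stack_runs_def)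

lemma sum_eq_gsum_decomp:
  "(\<Sum>j\<in>{1..length ps}. \<Sum>m\<in>{1..n}.
      smult (mat_star SigS n M (take (j - 1) ps) [] i m) (omega_l SigV iprod n M l [ps ! (j - 1)] m))
    = gsum SigV enc_decomp decomp_weight decomp"
proof -
  define B where "B = (\<lambda>(j, m). all_walks n (take (j - 1) ps, i) ([], m) \<times> (runs n l :: (nat \<Rightarrow> 'g vertex) set))"
  have summand: "smult (mat_star SigS n M (take (j - 1) ps) [] i m) (omega_l SigV iprod n M l [ps ! (j - 1)] m)
      = gsum SigV (\<lambda>b. enc_decomp ((j, m), b)) (\<lambda>b. decomp_weight ((j, m), b)) (B (j, m))" for j m
  proof -
    have "smult (mat_star SigS n M (take (j - 1) ps) [] i m) (omega_l SigV iprod n M l [ps ! (j - 1)] m)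
        = smult (gsum SigS encc (walk_weight M (take (j - 1) ps, i)) (all_walks n (take (j - 1) ps, i) ([], m)))
            (gsum SigV encs (run_weight iprod M ([ps ! (j - 1)], m)) (runs n l))"
      by (simp only: mat_star_eq_walks[OF semiring_S] omega_l_eq_runs)
    also have "\<dots> = gsum SigV (\<lambda>b. enc_decomp ((j, m), b))
        (\<lambda>(xs, q). smult (walk_weight M (take (j - 1) ps, i) xs) (run_weight iprod M ([ps ! (j - 1)], m) q))
        (all_walks n (take (j - 1) ps, i) ([], m) \<times> runs n l)"
      by (rule gsum_smult_gsum[OF inj_on_encc inj_on_encs inj_on_enc_decomp_Pair])
    also have "\<dots> = gsum SigV (\<lambda>b. enc_decomp ((j, m), b)) (\<lambda>b. decomp_weight ((j, m), b)) (B (j, m))"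
      unfolding B_def prod.case by (rule V.gsum_cong) (auto simp: decomp_weight_def)
    finally show ?thesis .
  qed
  have "(\<Sum>j\<in>{1..length ps}. \<Sum>m\<in>{1..n}.
      smult (mat_star SigS n M (take (j - 1) ps) [] i m) (omega_l SigV iprod n M l [ps ! (j - 1)] m))
    = (\<Sum>a\<in>{1..length ps} \<times> {1..n}. gsum SigV (\<lambda>b. enc_decomp (a, b)) (\<lambda>b. decomp_weight (a, b)) (B a))"
    unfolding sum.cartesian_product by (rule sum.cong) (auto simp only: summand split: prod.split)
  also have "\<dots> = gsum SigV enc_decomp decomp_weight decomp"
    unfolding decomp_def B_def[symmetric]
    by (rule V.gsum_Sigma) (auto intro: inj_on_subset[OF inj_enc_decomp])
  finally show ?thesis .
qed

lemma gsum_decomp_eq_omega_l: "gsum SigV enc_decomp decomp_weight decomp = omega_l SigV iprod n M l ps i"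
proof -
  have "gsum SigV enc_decomp decomp_weight decomp = gsum SigV enc_decomp decomp_weight stack_decomp"
    by (rule V.gsum_mono_neutral_right)
      (auto simp: stack_decomp_def decomp_weight_eq_0 intro: inj_on_subset[OF inj_enc_decomp])
  also have "\<dots> = gsum SigV enc_decomp (run_weight iprod M (ps, i) \<circ> glue) stack_decomp"
    by (rule V.gsum_cong) (auto simp: stack_decomp_def run_weight_glue)
  also have "\<dots> = gsum SigV encs (run_weight iprod M (ps, i)) (glue ` stack_decomp)"
    using bij_betw_glue
    by (intro V.gsum_reindex[symmetric]) (auto simp: bij_betw_def inj_on_encs intro: inj_on_subset[OF inj_enc_decomp])
  also have "glue ` stack_decomp = stack_runs"
    using bij_betw_glue by (simp add: bij_betw_def)
  also have "gsum SigV encs (run_weight iprod M (ps, i)) stack_runs =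
      gsum SigV encs (run_weight iprod M (ps, i)) (runs n l)"
    by (rule V.gsum_mono_neutral_right[symmetric])
      (auto simp: stack_runs_def inj_on_encs run_weight_not_stack_run)
  finally show ?thesis by (simp only: omega_l_eq_runs)
qed

end

theorem lemma5:
  fixes SigS :: "(idx \<Rightarrow> 'a::{semiring_0,monoid_mult}) \<Rightarrow> idx set \<Rightarrow> 'a"
    and SigV :: "(idx \<Rightarrow> 'v::comm_monoid_add) \<Rightarrow> idx set \<Rightarrow> 'v"
    and smult :: "'a \<Rightarrow> 'v \<Rightarrow> 'v"
    and iprod :: "(nat \<Rightarrow> 'a) \<Rightarrow> 'v"
    and n :: nat
    and M :: "'g::finite list \<Rightarrow> 'g list \<Rightarrow> nat \<Rightarrow> nat \<Rightarrow> 'a"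
    and ps :: "'g list"
    and l i :: nat
  assumes "complete_ssp SigS SigV smult iprod"
    and "n \<ge> 1"
    and "pushdown_tm n M"
    and "length ps \<ge> 1"
    and "l \<le> n"
    and "i \<in> {1..n}"
  shows "omega_l SigV iprod n M l ps i =
    (\<Sum>j\<in>{1..length ps}. \<Sum>m\<in>{1..n}.
       smult (mat_star SigS n M (take (j - 1) ps) [] i m) (omega_l SigV iprod n M l [ps ! (j - 1)] m))"
proof -
  interpret pushdown_omega SigS SigV smult iprod n M ps i l
  proof (intro pushdown_omega.intro stack_split.intro)
    show "complete_pair SigS SigV smult iprod" using assms(1) by (rule complete_pairI)
  qed (use assms in auto)
  show ?thesis by (simp only: sum_eq_gsum_decomp gsum_decomp_eq_omega_l)
qed

end
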